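(* Let $\underline{x}<\bar x$, $\underline{b}\le\bar b$, and $C$ with $\underline{b}(\bar x-\underline{x})\le C\le\bar b(\bar x-\underline{x})$, and let $g:(\underline{x},\bar x]\to(-\infty,\infty]$ be measurable. Consider the problem of maximizing $\int_{\underline{x}}^{\bar x}(h(x)-g(x))_+\,dx$ over functions $h$ on $(\underline{x},\bar x]$ such that $\int_{\underline{x}}^{\bar x}h(x)\,dx=C$, $\underline{b}\le h(x)\le\bar b$ for $x\in(\underline{x},\bar x]$, and $h$ is non-increasing and left-continuous. Then an optimal solution $h^\star$ exists and has the form $h^\star(x)=y_1^\star$ for $\underline{x}<x\le x_1^\star$, $h^\star(x)=y_2^\star$ for $x_1^\star<x\le x_2^\star$, $h^\star(x)=y_3^\star$ for $x_2^\star<x\le\bar x$, for some $\underline{b}\le y_3^\star\le y_2^\star\le y_1^\star\le\bar b$ and $\underline{x}\le x_1^\star\le x_2^\star\le\bar x$.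
   Context: $(t)_+=\max(t,0)$. *)

theory Defs
  imports "HOL-Analysis.Analysis"
begin

definition feasible7 :: "real \<Rightarrow> real \<Rightarrow> real \<Rightarrow> real \<Rightarrow> real \<Rightarrow> (real \<Rightarrow> real) \<Rightarrow> bool" where
  "feasible7 xl xu bl bu C h \<longleftrightarrow>
     (h has_integral C) {xl<..xu} \<and>
     (\<forall>x\<in>{xl<..xu}. bl \<le> h x \<and> h x \<le> bu) \<and>
     (\<forall>x y. xl < x \<and> x \<le> y \<and> y \<le> xu \<longrightarrow> h y \<le> h x) \<and>
     (\<forall>x\<in>{xl<..xu}. continuous (at_left x) h)"

definition objective7 :: "real \<Rightarrow> real \<Rightarrow> (real \<Rightarrow> ereal) \<Rightarrow> (real \<Rightarrow> real) \<Rightarrow> ennreal" where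
  "objective7 xl xu g h =
     (\<integral>\<^sup>+ x. e2ennreal (max 0 (ereal (h x) - g x)) * indicator {xl<..xu} x \<partial>lebesgue)"

end

theory Submission
  imports Defs
begin

text \<open>
  The objective integrates the positive part of h x - g x, which is non-decreasing, convex and
  1-Lipschitz in the value h x. Up to a uniform error (bu - bl)/n, every feasible h lies below a
  non-increasing left-continuous step function with the same integral, bottom value \<ge> bl and
  top value bu. Among such step functions with fixed bottom value, total jump and integral, one
  with three jumps at distinct points is a convex combination of two that each lose a jump, so by
  convexity jumps can be removed until at most two remain. The step functions with at most two
  jumps form a compact five-parameter family on which the objective is Lipschitz, hence it is
  maximised there; the maximiser takes at most three values and dominates every feasible h.
\<close>

definition excess :: "(real \<Rightarrow> ereal) \<Rightarrow> real \<Rightarrow> real \<Rightarrow> ennreal" where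
  "excess g x r = e2ennreal (max 0 (ereal r - g x))"

lemma objective7_eq_excess:
  "objective7 xl xu g h = (\<integral>\<^sup>+ x. excess g x (h x) * indicator {xl<..xu} x \<partial>lebesgue)"
  by (simp add: objective7_def excess_def)

lemma excess_infinity: "g x = \<infinity> \<Longrightarrow> excess g x r = 0"
  by (simp add: excess_def zero_ennreal.abs_eq[symmetric])

lemma excess_real:
  assumes "g x = ereal G" shows "excess g x r = ennreal (r - G)"
proof -
  have "max 0 (ereal r - g x) = ereal (max 0 (r - G))" using assms by (auto simp: max_def)
  then show ?thesis by (simp only: excess_def e2ennreal_ereal ennreal_max_0)
qed

lemma excess_mono: "r \<le> s \<Longrightarrow> excess g x r \<le> excess g x s"
  unfolding excess_def by (intro e2ennreal_mono max.mono ereal_minus_mono) auto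

lemma excess_add_le:
  assumes "g x \<noteq> -\<infinity>" "0 \<le> e"
  shows "excess g x (r + e) \<le> excess g x r + ennreal e"
proof (cases "g x")
  case (real G)
  have "ennreal (r + e - G) \<le> ennreal (max 0 (r - G) + e)"
    by (intro ennreal_leI) auto
  also have "\<dots> = ennreal (max 0 (r - G)) + ennreal e"
    using assms by (intro ennreal_plus) auto
  finally show ?thesis unfolding excess_real[of g x G, OF real] ennreal_max_0 .
qed (use assms in \<open>auto simp: excess_infinity\<close>)

lemma excess_convex:
  assumes "g x \<noteq> -\<infinity>" "0 \<le> l" "l \<le> 1"
  shows "excess g x (l * a + (1 - l) * b) \<le> ennreal l * excess g x a + ennreal (1 - l) * excess g x b"
proof (cases "g x")
  case (real G)
  have "ennreal (l * a + (1 - l) * b - G) = ennreal (l * (a - G) + (1 - l) * (b - G))"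
    by (simp add: algebra_simps)
  also have "\<dots> \<le> ennreal (l * max 0 (a - G) + (1 - l) * max 0 (b - G))"
    using assms by (intro ennreal_leI add_mono mult_left_mono) auto
  also have "\<dots> = ennreal l * ennreal (max 0 (a - G)) + ennreal (1 - l) * ennreal (max 0 (b - G))"
    using assms by (simp add: ennreal_plus ennreal_mult)
  finally show ?thesis unfolding excess_real[of g x G, OF real] ennreal_max_0 .
qed (use assms in \<open>auto simp: excess_infinity\<close>)

lemma excess_measurable:
  assumes "S \<in> sets lebesgue" "g \<in> borel_measurable (restrict_space lebesgue S)"
    and "k \<in> borel_measurable borel"
  shows "(\<lambda>x. excess g x (k x) * indicator S x) \<in> borel_measurable lebesgue"
proof -
  have "k \<in> borel_measurable (restrict_space lebesgue S)"
    using assms(3) by (intro measurable_restrict_space1 measurable_completion) simp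
  then have "(\<lambda>x. excess g x (k x)) \<in> borel_measurable (restrict_space lebesgue S)"
    unfolding excess_def using assms(2) by measurable
  then show ?thesis using assms(1) by (simp add: borel_measurable_restrict_space_iff_ennreal)
qed

lemma nn_integral_lebesgue_has_integral:
  fixes e :: "'a::euclidean_space \<Rightarrow> real"
  assumes "(e has_integral I) S" "\<And>x. x \<in> S \<Longrightarrow> 0 \<le> e x"
  shows "(\<integral>\<^sup>+ x. ennreal (e x) * indicator S x \<partial>lebesgue) = ennreal I"
  using nn_integral_has_integral_lebesgue'[OF assms(2,1)] by (simp add: nn_integral_completion)

lemma min3_affine_hits_zero:
  fixes da db dc ea eb ec :: real
  assumes "0 < da" "0 < db" "0 < dc" "ea < 0 \<or> eb < 0 \<or> ec < 0"
  shows "\<exists>t>0. min (da + t * ea) (min (db + t * eb) (dc + t * ec)) = 0"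
proof -
  define m where "m t = min (da + t * ea) (min (db + t * eb) (dc + t * ec))" for t
  have "\<exists>T>0. m T \<le> 0"
    using assms(4)
  proof (elim disjE)
    assume "ea < 0" then show ?thesis using assms
      by (intro exI[of _ "da / (- ea)"]) (auto simp: m_def field_simps)
  next
    assume "eb < 0" then show ?thesis using assms
      by (intro exI[of _ "db / (- eb)"]) (auto simp: m_def field_simps)
  next
    assume "ec < 0" then show ?thesis using assms
      by (intro exI[of _ "dc / (- ec)"]) (auto simp: m_def field_simps)
  qed
  then obtain T where T: "T > 0" "m T \<le> 0" by blast
  have m0: "m 0 > 0" using assms by (simp add: m_def)
  have "continuous_on {0..T} m" unfolding m_def by (intro continuous_intros)
  then obtain t where "0 \<le> t" "t \<le> T" "m t = 0"
    using IVT2'[of m T 0 0] T m0 by force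
  moreover from this m0 have "t \<noteq> 0" by auto
  ultimately show ?thesis unfolding m_def by (intro exI[of _ t]) auto
qed

lemma convex_weight_exists:
  fixes a b c :: real
  assumes "a \<le> c" "c \<le> b"
  shows "\<exists>l. 0 \<le> l \<and> l \<le> 1 \<and> (1 - l) * a + l * b = c"
proof -
  \<comment> \<open>If a = b the junk value l = 0 of the division is the right choice, as then c = a.\<close>
  define l where "l = (c - a) / (b - a)"
  have "l * (b - a) = c - a" using assms by (cases "a = b") (simp_all add: l_def)
  moreover have "0 \<le> l" "l \<le> 1" unfolding l_def using assms by (auto simp: divide_le_eq_1)
  ultimately show ?thesis by (intro exI[of _ l]) (simp add: algebra_simps)
qed

lemma ennreal_lipschitz_attains_sup:
  fixes f :: "'a::metric_space \<Rightarrow> ennreal"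
  assumes S: "compact S" "S \<noteq> {}" and K: "0 \<le> K"
    and lip: "\<And>p p'. p \<in> S \<Longrightarrow> p' \<in> S \<Longrightarrow> f p \<le> f p' + ennreal (K * dist p p')"
  shows "\<exists>p\<in>S. \<forall>p'\<in>S. f p' \<le> f p"
proof (cases "\<exists>p\<in>S. f p = top")
  case True
  then show ?thesis by (metis top_greatest)
next
  case False
  define r where "r p = enn2real (f p)" for p
  have f_r: "f p = ennreal (r p)" if "p \<in> S" for p
    using False that by (simp add: r_def less_top)
  have r_le: "r p \<le> r p' + K * dist p p'" if "p \<in> S" "p' \<in> S" for p p'
  proof -
    have "ennreal (r p) \<le> ennreal (r p') + ennreal (K * dist p p')"
      using lip[OF that] by (simp only: f_r[OF that(1)] f_r[OF that(2)])
    also have "\<dots> = ennreal (r p' + K * dist p p')"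
      using K by (intro ennreal_plus[symmetric]) (auto simp: r_def)
    finally show ?thesis using K by (subst (asm) ennreal_le_iff) (auto simp: r_def)
  qed
  have "dist (r p) (r p') \<le> K * dist p p'" if "p \<in> S" "p' \<in> S" for p p'
    using r_le[OF that] r_le[OF that(2,1)] by (simp add: dist_real_def dist_commute abs_le_iff)
  then have "continuous_on S r"
    using K by (intro lipschitz_on_continuous_on[of K]) (auto simp: lipschitz_on_def)
  then obtain p where "p \<in> S" "\<forall>p'\<in>S. r p' \<le> r p"
    using continuous_attains_sup[OF S] by blast
  then show ?thesis by (intro bexI[of _ p]) (auto simp: f_r intro: ennreal_leI)
qed

lemma dist_tuple5_bounds:
  fixes a b c d e a' b' c' d' e' :: real
  defines "\<delta> \<equiv> dist (a, b, c, d, e) (a', b', c', d', e')"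
  shows "\<bar>a - a'\<bar> \<le> \<delta>" "\<bar>b - b'\<bar> \<le> \<delta>" "\<bar>c - c'\<bar> \<le> \<delta>" "\<bar>d - d'\<bar> \<le> \<delta>" "\<bar>e - e'\<bar> \<le> \<delta>"
proof -
  have 1: "dist (b, c, d, e) (b', c', d', e') \<le> \<delta>"
    unfolding \<delta>_def using dist_snd_le[of "(a, b, c, d, e)" "(a', b', c', d', e')"] by (simp only: snd_conv)
  have 2: "dist (c, d, e) (c', d', e') \<le> \<delta>"
    using dist_snd_le[of "(b, c, d, e)" "(b', c', d', e')"] 1 unfolding snd_conv by (rule order_trans)
  have 3: "dist (d, e) (d', e') \<le> \<delta>"
    using dist_snd_le[of "(c, d, e)" "(c', d', e')"] 2 unfolding snd_conv by (rule order_trans)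
  have 0: "dist a a' \<le> \<delta>"
    unfolding \<delta>_def using dist_fst_le[of "(a, b, c, d, e)" "(a', b', c', d', e')"] by (simp only: fst_conv)
  show "\<bar>a - a'\<bar> \<le> \<delta>" using 0 by (simp only: dist_real_def)
  show "\<bar>b - b'\<bar> \<le> \<delta>" using dist_fst_le[of "(b, c, d, e)" "(b', c', d', e')"] 1
    unfolding fst_conv dist_real_def by (rule order_trans)
  show "\<bar>c - c'\<bar> \<le> \<delta>" using dist_fst_le[of "(c, d, e)" "(c', d', e')"] 2
    unfolding fst_conv dist_real_def by (rule order_trans)
  show "\<bar>d - d'\<bar> \<le> \<delta>" using dist_fst_le[of "(d, e)" "(d', e')"] 3
    unfolding fst_conv dist_real_def by (rule order_trans)
  show "\<bar>e - e'\<bar> \<le> \<delta>" using dist_snd_le[of "(d, e)" "(d', e')"] 3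
    unfolding snd_conv dist_real_def by (rule order_trans)
qed

section \<open>Non-increasing step functions\<close>

definition step_fun :: "real \<Rightarrow> (real \<times> real) list \<Rightarrow> real \<Rightarrow> real" where
  "step_fun y0 js x = y0 + sum_list (map (\<lambda>(d, q). if x \<le> q then d else 0) js)"

definition jump_total :: "(real \<times> real) list \<Rightarrow> real" where
  "jump_total js = sum_list (map fst js)"

definition jump_mass :: "real \<Rightarrow> (real \<times> real) list \<Rightarrow> real" where
  "jump_mass xl js = sum_list (map (\<lambda>(d, q). d * (q - xl)) js)"

definition valid_jumps :: "real \<Rightarrow> real \<Rightarrow> (real \<times> real) list \<Rightarrow> bool" where
  "valid_jumps xl xu js \<longleftrightarrow> (\<forall>(d, q)\<in>set js. 0 \<le> d \<and> xl \<le> q \<and> q \<le> xu)"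

lemma step_fun_Nil [simp]: "step_fun y0 [] x = y0"
  by (simp add: step_fun_def)

lemma step_fun_Cons [simp]: "step_fun y0 ((d, q) # js) x = step_fun y0 js x + (if x \<le> q then d else 0)"
  by (simp add: step_fun_def)

lemma jump_total_simps [simp]: "jump_total [] = 0" "jump_total ((d, q) # js) = d + jump_total js"
  by (simp_all add: jump_total_def)

lemma jump_mass_simps [simp]: "jump_mass xl [] = 0" "jump_mass xl ((d, q) # js) = d * (q - xl) + jump_mass xl js"
  by (simp_all add: jump_mass_def)

lemma valid_jumps_simps [simp]:
  "valid_jumps xl xu []"
  "valid_jumps xl xu ((d, q) # js) \<longleftrightarrow> 0 \<le> d \<and> xl \<le> q \<and> q \<le> xu \<and> valid_jumps xl xu js"
  by (auto simp: valid_jumps_def)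

lemma step_fun_upt:
  "step_fun y0 (map (\<lambda>j. (D, q j)) [1..<n+1]) x = y0 + (\<Sum>j=1..n. if x \<le> q j then D else 0)"
proof -
  have "sum_list (map (\<lambda>(d, q). if x \<le> q then d else 0) (map (\<lambda>j. (D, q j)) [1..<n+1]))
      = (\<Sum>j\<in>{1..<n+1}. if x \<le> q j then D else 0)"
    by (simp add: sum_set_upt_conv_sum_list_nat[symmetric] o_def)
  also have "{1..<n+1} = {1..n}" by auto
  finally show ?thesis by (simp add: step_fun_def)
qed

lemma jump_total_upt: "jump_total (map (\<lambda>j. (D, q j)) [1..<n+1]) = real n * D"
  by (simp add: jump_total_def o_def sum_list_triv)

lemma step_fun_scale:
  "step_fun (c * y0 + a) (map (\<lambda>(d, q). (c * d, q)) js) x = c * step_fun y0 js x + a"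
  by (induction js arbitrary: y0) (auto simp: algebra_simps)

lemma jump_total_scale: "jump_total (map (\<lambda>(d, q). (c * d, q)) js) = c * jump_total js"
  by (induction js) (auto simp: algebra_simps)

lemma step_fun_measurable: "step_fun y0 js \<in> borel_measurable borel"
proof (induction js)
  case (Cons j js)
  obtain d q where "j = (d, q)" by force
  moreover have "(\<lambda>x. if x \<le> q then d else (0::real)) \<in> borel_measurable borel" by measurable
  ultimately show ?case using Cons by (simp add: borel_measurable_add)
qed simp

lemma has_integral_const_Ioc:
  fixes a b c :: real assumes "a \<le> b"
  shows "((\<lambda>x. c) has_integral c * (b - a)) {a<..b}"
proof -
  have "((\<lambda>x. c) has_integral c * (b - a)) {a..b} \<longleftrightarrow> ((\<lambda>x. c) has_integral c * (b - a)) {a<..b}"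
    by (rule has_integral_spike_set_eq; rule negligible_subset[of "{a}"]) auto
  with has_integral_const_real[of c a b] assms show ?thesis by (simp add: mult.commute)
qed

lemma has_integral_jump_Ioc:
  fixes xl xu q d :: real assumes "xl \<le> q" "q \<le> xu"
  shows "((\<lambda>x. if x \<le> q then d else 0) has_integral d * (q - xl)) {xl<..xu}"
proof -
  have "((\<lambda>x. if x \<in> {xl<..q} then d else 0) has_integral d * (q - xl)) {xl<..xu}"
    using assms by (subst has_integral_restrict) (auto intro: has_integral_const_Ioc)
  moreover have "((\<lambda>x. if x \<le> q then d else 0) has_integral d * (q - xl)) {xl<..xu} \<longleftrightarrow>
      ((\<lambda>x. if x \<in> {xl<..q} then d else 0) has_integral d * (q - xl)) {xl<..xu}"
    by (rule has_integral_cong) auto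
  ultimately show ?thesis by simp
qed

lemma step_fun_has_integral:
  assumes "xl \<le> xu" "valid_jumps xl xu js"
  shows "(step_fun y0 js has_integral y0 * (xu - xl) + jump_mass xl js) {xl<..xu}"
  using assms(2)
proof (induction js)
  case Nil
  then show ?case using has_integral_const_Ioc[OF assms(1)] by simp
next
  case (Cons j js)
  obtain d q where j: "j = (d, q)" by force
  have "((\<lambda>x. step_fun y0 js x + (if x \<le> q then d else 0)) has_integral
          (y0 * (xu - xl) + jump_mass xl js) + d * (q - xl)) {xl<..xu}"
    using Cons j by (intro has_integral_add has_integral_jump_Ioc) auto
  then show ?case unfolding j by (simp add: algebra_simps)
qed

lemma step_fun_antimono: "valid_jumps xl xu js \<Longrightarrow> x \<le> y \<Longrightarrow> step_fun y0 js y \<le> step_fun y0 js x"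
  by (induction js) (auto intro: add_mono)

lemma step_fun_bounds:
  assumes "valid_jumps xl xu js"
  shows "y0 \<le> step_fun y0 js x" "step_fun y0 js x \<le> y0 + jump_total js"
  using assms by (induction js) (auto intro: add_mono)

lemma step_fun_continuous_at_left: "continuous (at_left x) (step_fun y0 js)"
proof (induction js)
  case (Cons j js)
  obtain d q where j: "j = (d, q)" by force
  have "eventually (\<lambda>y. (if y \<le> q then d else (0::real)) = (if x \<le> q then d else 0)) (at_left x)"
  proof (cases "q < x")
    case True
    then show ?thesis by (intro eventually_mono[OF eventually_at_left_real[of q x]]) auto
  next
    case False
    then show ?thesis by (intro eventually_mono[OF eventually_at_left_real[of "x - 1" x]]) auto
  qed
  then have "continuous (at_left x) (\<lambda>y. if y \<le> q then d else (0::real))"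
    unfolding continuous_within by (rule tendsto_eventually)
  with Cons show ?case unfolding j step_fun_Cons by (intro continuous_add) auto
qed simp

lemma filter_nonzero_jumps:
  fixes js :: "(real \<times> real) list"
  defines "js' \<equiv> filter (\<lambda>(d, q). d \<noteq> 0) js"
  shows "step_fun y0 js' = step_fun y0 js" "jump_total js' = jump_total js"
    "jump_mass xl js' = jump_mass xl js" "valid_jumps xl xu js \<Longrightarrow> valid_jumps xl xu js'"
    "\<exists>j\<in>set js. fst j = 0 \<Longrightarrow> length js' < length js"
  unfolding js'_def
  by (induction js) (auto simp: fun_eq_iff intro: le_less_trans[OF length_filter_le] split: prod.splits)

lemma three_jumps_shift_moments:
  fixes da qa db qb dc qc t xl :: real and rest :: "(real \<times> real) list"
  defines "shifted \<equiv> (da + t * (qb - qc), qa) # (db + t * (qc - qa), qb) # (dc + t * (qa - qb), qc) # rest"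
    and "js \<equiv> (da, qa) # (db, qb) # (dc, qc) # rest"
  shows "jump_total shifted = jump_total js" "jump_mass xl shifted = jump_mass xl js"
  unfolding shifted_def js_def by (simp add: algebra_simps, simp, algebra)

lemma jump_le_jump_add:
  fixes d d' B x q q' :: real
  assumes "0 \<le> d" "d \<le> B" "0 \<le> d'"
  shows "(if x \<le> q then d else 0) \<le> (if x \<le> q' then d' else 0) + \<bar>d - d'\<bar> +
    B * ((if x \<le> max q q' then 1 else 0) - (if x \<le> min q q' then 1 else 0))"
  using assms by (auto simp: max_def min_def)

fun two_step :: "real \<times> real \<times> real \<times> real \<times> real \<Rightarrow> real \<Rightarrow> real" where
  "two_step (y0, d1, d2, q1, q2) = step_fun y0 [(d1, q1), (d2, q2)]"

definition two_step_params ::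
    "real \<Rightarrow> real \<Rightarrow> real \<Rightarrow> real \<Rightarrow> real \<Rightarrow> (real \<times> real \<times> real \<times> real \<times> real) set" where
  "two_step_params xl xu bl bu C = {(y0, d1, d2, q1, q2).
     bl \<le> y0 \<and> 0 \<le> d1 \<and> 0 \<le> d2 \<and> y0 + d1 + d2 \<le> bu \<and> xl \<le> q1 \<and> q1 \<le> xu \<and> xl \<le> q2 \<and> q2 \<le> xu \<and>
     y0 * (xu - xl) + d1 * (q1 - xl) + d2 * (q2 - xl) = C}"

lemma mem_two_step_params [simp]:
  "(y0, d1, d2, q1, q2) \<in> two_step_params xl xu bl bu C \<longleftrightarrow>
     bl \<le> y0 \<and> 0 \<le> d1 \<and> 0 \<le> d2 \<and> y0 + d1 + d2 \<le> bu \<and> xl \<le> q1 \<and> q1 \<le> xu \<and> xl \<le> q2 \<and> q2 \<le> xu \<and>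
     y0 * (xu - xl) + d1 * (q1 - xl) + d2 * (q2 - xl) = C"
  by (simp add: two_step_params_def)

lemma compact_two_step_params: "compact (two_step_params xl xu bl bu C)"
proof -
  have "closed (two_step_params xl xu bl bu C)" unfolding two_step_params_def case_prod_unfold
    by (intro closed_Collect_conj closed_Collect_le closed_Collect_eq continuous_intros)
  then have "compact (({bl..bu} \<times> {0..bu-bl} \<times> {0..bu-bl} \<times> {xl..xu} \<times> {xl..xu}) \<inter> two_step_params xl xu bl bu C)"
    by (intro compact_Int_closed compact_Times compact_Icc)
  also have "({bl..bu} \<times> {0..bu-bl} \<times> {0..bu-bl} \<times> {xl..xu} \<times> {xl..xu}) \<inter> two_step_params xl xu bl bu C
      = two_step_params xl xu bl bu C"
    by (auto simp: two_step_params_def)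
  finally show ?thesis .
qed

lemma two_step_params_nonempty:
  assumes "xl < xu" "bl * (xu - xl) \<le> C" "C \<le> bu * (xu - xl)"
  shows "(C / (xu - xl), 0, 0, xl, xl) \<in> two_step_params xl xu bl bu C"
  using assms by (simp add: field_simps)

lemma two_step_feasible:
  assumes "xl < xu" "p \<in> two_step_params xl xu bl bu C"
  shows "feasible7 xl xu bl bu C (two_step p)"
proof -
  obtain y0 d1 d2 q1 q2 where p: "p = (y0, d1, d2, q1, q2)" by (cases p) auto
  have valid: "valid_jumps xl xu [(d1, q1), (d2, q2)]" and y0: "bl \<le> y0" "y0 + d1 + d2 \<le> bu"
    using assms(2) by (auto simp: p)
  have "(two_step p has_integral C) {xl<..xu}"
    using step_fun_has_integral[OF _ valid, of y0] assms by (auto simp: p algebra_simps)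
  moreover have "bl \<le> two_step p x \<and> two_step p x \<le> bu" for x
    using step_fun_bounds[OF valid, of y0 x] y0 by (simp add: p)
  ultimately show ?thesis unfolding feasible7_def p two_step.simps
    using step_fun_antimono[OF valid] step_fun_continuous_at_left by (auto simp: p)
qed

lemma two_step_three_levels:
  assumes "p \<in> two_step_params xl xu bl bu C"
  shows "\<exists>y1 y2 y3 x1 x2. bl \<le> y3 \<and> y3 \<le> y2 \<and> y2 \<le> y1 \<and> y1 \<le> bu \<and> xl \<le> x1 \<and> x1 \<le> x2 \<and> x2 \<le> xu \<and>
    (\<forall>x. two_step p x = (if x \<le> x1 then y1 else if x \<le> x2 then y2 else y3))"
proof -
  obtain y0 d1 d2 q1 q2 where p: "p = (y0, d1, d2, q1, q2)" by (cases p) auto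
  have ranges: "bl \<le> y0" "0 \<le> d1" "0 \<le> d2" "y0 + d1 + d2 \<le> bu" "xl \<le> q1" "q1 \<le> xu" "xl \<le> q2" "q2 \<le> xu"
    using assms by (simp_all add: p)
  show ?thesis
  proof (cases "q1 \<le> q2")
    case True
    then have "two_step p x = (if x \<le> q1 then y0 + d1 + d2 else if x \<le> q2 then y0 + d2 else y0)" for x
      by (simp add: p)
    then show ?thesis using True ranges
      by (intro exI[of _ "y0 + d1 + d2"] exI[of _ "y0 + d2"] exI[of _ y0] exI[of _ q1] exI[of _ q2]) simp
  next
    case False
    then have "two_step p x = (if x \<le> q2 then y0 + d1 + d2 else if x \<le> q1 then y0 + d1 else y0)" for x
      by (simp add: p)
    then show ?thesis using False ranges
      by (intro exI[of _ "y0 + d1 + d2"] exI[of _ "y0 + d1"] exI[of _ y0] exI[of _ q2] exI[of _ q1]) simp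
  qed
qed

lemma step_fun_in_two_step_params:
  assumes "xl < xu" "valid_jumps xl xu js" "length js \<le> 2"
    and "bl \<le> y0" "y0 + jump_total js \<le> bu" "(step_fun y0 js has_integral C) {xl<..xu}"
  shows "\<exists>p\<in>two_step_params xl xu bl bu C. two_step p = step_fun y0 js"
proof -
  have C: "y0 * (xu - xl) + jump_mass xl js = C"
    using has_integral_unique[OF step_fun_has_integral assms(6)] assms(1,2) by simp
  show ?thesis
  proof (cases js)
    case Nil
    then show ?thesis using assms C
      by (intro bexI[of _ "(y0, 0, 0, xl, xl)"]) (auto simp: fun_eq_iff)
  next
    case (Cons j1 rest)
    obtain d1 q1 where j1: "j1 = (d1, q1)" by force
    show ?thesis
    proof (cases rest)
      case Nil
      then show ?thesis using assms C Cons j1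
        by (intro bexI[of _ "(y0, d1, 0, q1, xl)"]) (auto simp: fun_eq_iff)
    next
      case (Cons j2 rest')
      obtain d2 q2 where j2: "j2 = (d2, q2)" by force
      have "rest' = []" using assms(3) \<open>js = j1 # rest\<close> Cons by simp
      then show ?thesis using assms C \<open>js = j1 # rest\<close> Cons j1 j2
        by (intro bexI[of _ "(y0, d1, d2, q1, q2)"]) (auto simp: fun_eq_iff add.assoc)
    qed
  qed
qed

lemma two_step_le_two_step_add:
  assumes xl: "xl < xu" and p: "p \<in> two_step_params xl xu bl bu C" and p': "p' \<in> two_step_params xl xu bl bu C"
  obtains e bound where "e \<in> borel_measurable borel" "\<forall>x\<in>{xl<..xu}. 0 \<le> e x"
    "(e has_integral bound) {xl<..xu}" "bound \<le> (3 * (xu - xl) + 2 * (bu - bl)) * dist p p'"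
    "\<forall>x. two_step p x \<le> two_step p' x + e x"
proof -
  obtain y0 d1 d2 q1 q2 where p_eq: "p = (y0, d1, d2, q1, q2)" by (cases p) auto
  obtain y0' d1' d2' q1' q2' where p'_eq: "p' = (y0', d1', d2', q1', q2')" by (cases p') auto
  define B where "B = bu - bl"
  define c0 where "c0 = \<bar>y0 - y0'\<bar> + \<bar>d1 - d1'\<bar> + \<bar>d2 - d2'\<bar>"
  define e where "e x = c0 + B * ((if x \<le> max q1 q1' then 1 else 0) - (if x \<le> min q1 q1' then 1 else 0))
     + B * ((if x \<le> max q2 q2' then 1 else 0) - (if x \<le> min q2 q2' then 1 else 0))" for x
  define bound where "bound = c0 * (xu - xl) + B * \<bar>q1 - q1'\<bar> + B * \<bar>q2 - q2'\<bar>"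
  have ranges: "0 \<le> d1" "0 \<le> d2" "d1 \<le> B" "d2 \<le> B" "0 \<le> d1'" "0 \<le> d2'"
    "xl \<le> q1" "q1 \<le> xu" "xl \<le> q2" "q2 \<le> xu" "xl \<le> q1'" "q1' \<le> xu" "xl \<le> q2'" "q2' \<le> xu"
    using p p' by (auto simp: p_eq p'_eq B_def)
  have gap: "max a b - xl - (min a b - xl) = \<bar>a - b\<bar>" for a b :: real
    by (simp add: max_def min_def)
  have "(e has_integral c0 * (xu - xl) + B * ((max q1 q1' - xl) - (min q1 q1' - xl))
      + B * ((max q2 q2' - xl) - (min q2 q2' - xl))) {xl<..xu}"
    unfolding e_def using ranges xl
    by (intro has_integral_add has_integral_const_Ioc has_integral_mult_right has_integral_diff
        has_integral_jump_Ioc[where d = 1, simplified]) auto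
  then have e_int: "(e has_integral bound) {xl<..xu}"
    unfolding bound_def by (simp only: gap)
  have e_nonneg: "\<forall>x\<in>{xl<..xu}. 0 \<le> e x" using ranges by (auto simp: e_def c0_def max_def min_def)
  have dominated: "two_step p x \<le> two_step p' x + e x" for x
    using jump_le_jump_add[OF ranges(1,3,5), of x q1 q1'] jump_le_jump_add[OF ranges(2,4,6), of x q2 q2']
      abs_ge_self[of "y0 - y0'"]
    unfolding p_eq p'_eq e_def c0_def two_step.simps step_fun_Cons step_fun_Nil by linarith
  have e_meas: "e \<in> borel_measurable borel" unfolding e_def by measurable
  have "bound \<le> (3 * (xu - xl) + 2 * B) * dist p p'"
  proof -
    note \<delta> = dist_tuple5_bounds[where a = y0 and b = d1 and c = d2 and d = q1 and e = q2
      and a' = y0' and b' = d1' and c' = d2' and d' = q1' and e' = q2', folded p_eq p'_eq]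
    have "c0 \<le> 3 * dist p p'" using \<delta>(1-3) by (simp add: c0_def)
    then have "c0 * (xu - xl) \<le> 3 * dist p p' * (xu - xl)" using xl by (simp add: mult_right_mono)
    moreover have "B * \<bar>q1 - q1'\<bar> + B * \<bar>q2 - q2'\<bar> \<le> B * dist p p' + B * dist p p'"
      using \<delta>(4,5) ranges by (intro add_mono mult_left_mono) auto
    ultimately show ?thesis by (simp add: bound_def algebra_simps)
  qed
  then show ?thesis using that[OF e_meas e_nonneg e_int] dominated unfolding B_def by blast
qed

section \<open>Approximating feasible functions by step functions\<close>

definition level_edge :: "real \<Rightarrow> real \<Rightarrow> (real \<Rightarrow> real) \<Rightarrow> real \<Rightarrow> real" where
  "level_edge xl xu h c = (if \<exists>x\<in>{xl<..xu}. c \<le> h x then Sup {x\<in>{xl<..xu}. c \<le> h x} else xl)"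

lemma level_edge_bounds:
  assumes "xl \<le> xu"
  shows "xl \<le> level_edge xl xu h c" "level_edge xl xu h c \<le> xu"
proof -
  let ?A = "{x\<in>{xl<..xu}. c \<le> h x}"
  have bdd: "bdd_above ?A" by (rule bdd_aboveI[of _ xu]) auto
  show "xl \<le> level_edge xl xu h c"
  proof (cases "?A = {}")
    case False
    then obtain y where y: "y \<in> ?A" by blast
    then have "y \<le> Sup ?A" by (intro cSup_upper bdd)
    with y have "xl \<le> Sup ?A" by auto
    with False show ?thesis by (auto simp: level_edge_def)
  qed (auto simp: level_edge_def)
  show "level_edge xl xu h c \<le> xu"
  proof (cases "?A = {}")
    case False
    then have "Sup ?A \<le> xu" by (intro cSup_least) auto
    with False show ?thesis by (auto simp: level_edge_def)
  qed (use assms in \<open>auto simp: level_edge_def\<close>)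
qed

lemma le_level_edge_iff:
  assumes mono: "\<forall>x y. xl < x \<and> x \<le> y \<and> y \<le> xu \<longrightarrow> h y \<le> h x"
    and lc: "\<forall>x\<in>{xl<..xu}. continuous (at_left x) h"
    and x: "x \<in> {xl<..xu}"
  shows "x \<le> level_edge xl xu h c \<longleftrightarrow> c \<le> h x"
proof (cases "\<exists>y\<in>{xl<..xu}. c \<le> h y")
  case True
  let ?A = "{x\<in>{xl<..xu}. c \<le> h x}"
  have bdd: "bdd_above ?A" by (rule bdd_aboveI[of _ xu]) auto
  have ne: "?A \<noteq> {}" using True by blast
  have edge: "level_edge xl xu h c = Sup ?A" using True by (simp add: level_edge_def)
  have below: "c \<le> h z" if z: "z \<in> {xl<..xu}" "z < Sup ?A" for z
  proof -
    obtain y where y: "y \<in> ?A" "z < y" using less_cSup_iff[OF ne bdd] z(2) by blast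
    then have "h y \<le> h z" using mono z by auto
    then show ?thesis using y by auto
  qed
  show ?thesis
  proof
    assume "x \<le> level_edge xl xu h c"
    then consider "x < Sup ?A" | "x = Sup ?A" unfolding edge by linarith
    then show "c \<le> h x"
    proof cases
      case 2
      have "eventually (\<lambda>z. z \<in> {xl<..<x}) (at_left x)" using x by (intro eventually_at_left_real) auto
      then have ev: "eventually (\<lambda>z. c \<le> h z) (at_left x)"
        by (rule eventually_mono) (use x 2 below in auto)
      have "(h \<longlongrightarrow> h x) (at_left x)" using lc x by (simp add: continuous_within)
      from tendsto_lowerbound[OF this ev trivial_limit_at_left_real] show ?thesis .
    qed (use below x in blast)
  next
    assume "c \<le> h x"
    then show "x \<le> level_edge xl xu h c" unfolding edge using x by (intro cSup_upper bdd) auto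
  qed
qed (use x in \<open>auto simp: level_edge_def\<close>)

lemma sum_threshold_bounds:
  fixes D t :: real and n :: nat
  assumes "0 \<le> D" "0 \<le> t"
  shows "(\<Sum>j=1..n. if real j * D \<le> t then D else 0) \<le> t \<and>
    min t (real n * D) - D \<le> (\<Sum>j=1..n. if real j * D \<le> t then D else 0) \<and>
    (real n * D \<le> t \<longrightarrow> (\<Sum>j=1..n. if real j * D \<le> t then D else 0) = real n * D)"
proof (induction n)
  case (Suc n)
  have "real n * D \<le> real (Suc n) * D" using assms by (simp add: mult_right_mono)
  with Suc assms show ?case by (auto simp: algebra_simps min_def)
qed (use assms in simp)

lemma feasible_staircase:
  assumes xl: "xl < xu" and h: "feasible7 xl xu bl bu C h" and n: "0 < n"
  shows "\<exists>js. valid_jumps xl xu js \<and> jump_total js = bu - bl \<and>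
    (\<forall>x\<in>{xl<..xu}. step_fun bl js x \<le> h x \<and> h x \<le> step_fun bl js x + (bu - bl) / real n)"
proof -
  have hb: "\<forall>x\<in>{xl<..xu}. bl \<le> h x \<and> h x \<le> bu"
    and mono: "\<forall>x y. xl < x \<and> x \<le> y \<and> y \<le> xu \<longrightarrow> h y \<le> h x"
    and lc: "\<forall>x\<in>{xl<..xu}. continuous (at_left x) h"
    using h by (auto simp: feasible7_def)
  define D where "D = (bu - bl) / real n"
  define js where "js = map (\<lambda>j. (D, level_edge xl xu h (bl + real j * D))) [1..<n+1]"
  have "bl \<le> bu" using hb xl by force
  then have D: "0 \<le> D" "real n * D = bu - bl" using n by (auto simp: D_def)
  have "valid_jumps xl xu js" unfolding js_def valid_jumps_def
    using D level_edge_bounds[of xl xu] xl by auto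
  moreover have "jump_total js = bu - bl" unfolding js_def jump_total_upt using D by simp
  moreover have "step_fun bl js x \<le> h x \<and> h x \<le> step_fun bl js x + D" if x: "x \<in> {xl<..xu}" for x
  proof -
    let ?S = "\<Sum>j=1..n. if real j * D \<le> h x - bl then D else 0"
    have "step_fun bl js x = bl + ?S"
      unfolding js_def step_fun_upt using le_level_edge_iff[OF mono lc x] by (simp add: le_diff_eq add.commute)
    moreover have "0 \<le> h x - bl" "h x - bl \<le> real n * D" using hb x D by auto
    ultimately show ?thesis
      using sum_threshold_bounds[OF D(1), of "h x - bl" n] by (auto simp: min_def)
  qed
  ultimately show ?thesis unfolding D_def by blast
qed

lemma feasible_dominated_by_step:
  assumes xl: "xl < xu" and h: "feasible7 xl xu bl bu C h" and n: "0 < n"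
  shows "\<exists>y0 js. valid_jumps xl xu js \<and> bl \<le> y0 \<and> y0 + jump_total js = bu \<and>
    (step_fun y0 js has_integral C) {xl<..xu} \<and>
    (\<forall>x\<in>{xl<..xu}. h x \<le> step_fun y0 js x + (bu - bl) / real n)"
proof -
  obtain js0 where stair: "valid_jumps xl xu js0" "jump_total js0 = bu - bl"
    "\<forall>x\<in>{xl<..xu}. step_fun bl js0 x \<le> h x \<and> h x \<le> step_fun bl js0 x + (bu - bl) / real n"
    using feasible_staircase[OF xl h n] by blast
  have h_int: "(h has_integral C) {xl<..xu}" and hb: "\<forall>x\<in>{xl<..xu}. bl \<le> h x \<and> h x \<le> bu"
    using h by (auto simp: feasible7_def)
  define I0 where "I0 = bl * (xu - xl) + jump_mass xl js0"
  have s0_int: "(step_fun bl js0 has_integral I0) {xl<..xu}"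
    unfolding I0_def using xl by (intro step_fun_has_integral stair(1)) simp
  have "I0 \<le> C" using has_integral_le[OF s0_int h_int] stair(3) by auto
  moreover have "C \<le> bu * (xu - xl)"
    using has_integral_le[OF h_int has_integral_const_Ioc] hb xl by (auto simp: mult.commute)
  \<comment> \<open>Mixing the staircase with the constant bu keeps the range and adjusts the integral to C.\<close>
  ultimately obtain lam where lam: "0 \<le> lam" "lam \<le> 1" "(1 - lam) * I0 + lam * (bu * (xu - xl)) = C"
    using convex_weight_exists by blast
  define y0 where "y0 = (1 - lam) * bl + lam * bu"
  define js where "js = map (\<lambda>(d, q). ((1 - lam) * d, q)) js0"
  have s_eq: "step_fun y0 js x = (1 - lam) * step_fun bl js0 x + lam * bu" for x
    unfolding y0_def js_def by (rule step_fun_scale)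
  show ?thesis
  proof (intro exI conjI ballI)
    show "valid_jumps xl xu js"
      using stair(1) lam(2) unfolding js_def valid_jumps_def by auto
    have "bl \<le> bu" using hb xl by force
    then show "bl \<le> y0" using lam(1) by (simp add: y0_def algebra_simps mult_right_mono)
    show "y0 + jump_total js = bu"
      unfolding y0_def js_def jump_total_scale stair(2) by (simp add: algebra_simps)
    have "((\<lambda>x. (1 - lam) * step_fun bl js0 x + lam * bu) has_integral
        (1 - lam) * I0 + lam * bu * (xu - xl)) {xl<..xu}"
      using xl by (intro has_integral_add has_integral_mult_right s0_int has_integral_const_Ioc) simp
    moreover have "(1 - lam) * I0 + lam * bu * (xu - xl) = C" using lam(3) by (simp add: mult.assoc)
    moreover have "step_fun y0 js = (\<lambda>x. (1 - lam) * step_fun bl js0 x + lam * bu)" using s_eq by blast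
    ultimately show "(step_fun y0 js has_integral C) {xl<..xu}" by simp
    fix x assume x: "x \<in> {xl<..xu}"
    have "step_fun bl js0 x \<le> bu" using stair(3) hb x by force
    then have "lam * step_fun bl js0 x \<le> lam * bu" using lam(1) by (rule mult_left_mono)
    then have "step_fun bl js0 x \<le> step_fun y0 js x" unfolding s_eq by (simp add: algebra_simps)
    then show "h x \<le> step_fun y0 js x + (bu - bl) / real n"
      using stair(3) x by force
  qed
qed

section \<open>Optimising the objective\<close>

context
  fixes xl xu :: real and g :: "real \<Rightarrow> ereal"
  assumes g_not_minf: "\<forall>x\<in>{xl<..xu}. g x \<noteq> -\<infinity>"
    and g_measurable: "g \<in> borel_measurable (restrict_space lebesgue {xl<..xu})"
begin

lemma objective7_le_add:
  assumes k: "k \<in> borel_measurable borel" and e: "e \<in> borel_measurable borel"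
    and I: "(e has_integral I) {xl<..xu}" and e_nonneg: "\<forall>x\<in>{xl<..xu}. 0 \<le> e x"
    and le: "\<forall>x\<in>{xl<..xu}. h x \<le> k x + e x"
  shows "objective7 xl xu g h \<le> objective7 xl xu g k + ennreal I"
proof -
  let ?S = "{xl<..xu}"
  have "objective7 xl xu g h
      \<le> (\<integral>\<^sup>+ x. excess g x (k x) * indicator ?S x + ennreal (e x) * indicator ?S x \<partial>lebesgue)"
    unfolding objective7_eq_excess
  proof (intro nn_integral_mono)
    fix x
    show "excess g x (h x) * indicator ?S x
        \<le> excess g x (k x) * indicator ?S x + ennreal (e x) * indicator ?S x"
    proof (cases "x \<in> ?S")
      case True
      have "excess g x (h x) \<le> excess g x (k x + e x)" using le True by (intro excess_mono) auto
      also have "\<dots> \<le> excess g x (k x) + ennreal (e x)"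
        using g_not_minf e_nonneg True by (intro excess_add_le) auto
      finally show ?thesis using True by simp
    qed simp
  qed
  also have "\<dots> = objective7 xl xu g k + (\<integral>\<^sup>+ x. ennreal (e x) * indicator ?S x \<partial>lebesgue)"
    unfolding objective7_eq_excess using excess_measurable[OF _ g_measurable k] e
    by (intro nn_integral_add) (auto intro!: measurable_completion)
  also have "(\<integral>\<^sup>+ x. ennreal (e x) * indicator ?S x \<partial>lebesgue) = ennreal I"
    using e_nonneg by (intro nn_integral_lebesgue_has_integral[OF I]) auto
  finally show ?thesis .
qed

lemma objective7_convex:
  assumes a: "a \<in> borel_measurable borel" and b: "b \<in> borel_measurable borel"
    and l: "0 \<le> l" "l \<le> 1"
    and h: "\<forall>x\<in>{xl<..xu}. h x = l * a x + (1 - l) * b x"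
  shows "objective7 xl xu g h \<le> max (objective7 xl xu g a) (objective7 xl xu g b)"
proof -
  let ?S = "{xl<..xu}" and ?M = "max (objective7 xl xu g a) (objective7 xl xu g b)"
  have "objective7 xl xu g h \<le> (\<integral>\<^sup>+ x. ennreal l * (excess g x (a x) * indicator ?S x)
      + ennreal (1 - l) * (excess g x (b x) * indicator ?S x) \<partial>lebesgue)"
    unfolding objective7_eq_excess
  proof (intro nn_integral_mono)
    fix x
    show "excess g x (h x) * indicator ?S x \<le> ennreal l * (excess g x (a x) * indicator ?S x)
        + ennreal (1 - l) * (excess g x (b x) * indicator ?S x)"
      using h g_not_minf l by (cases "x \<in> ?S") (auto intro!: excess_convex)
  qed
  also have "\<dots> = ennreal l * objective7 xl xu g a + ennreal (1 - l) * objective7 xl xu g b"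
    unfolding objective7_eq_excess
    using excess_measurable[OF _ g_measurable a] excess_measurable[OF _ g_measurable b]
    by (simp add: nn_integral_add nn_integral_cmult)
  also have "\<dots> \<le> ennreal l * ?M + ennreal (1 - l) * ?M"
    by (intro add_mono mult_left_mono) auto
  also have "\<dots> = ?M"
    using l by (simp add: distrib_right[symmetric] ennreal_plus[symmetric])
  finally show ?thesis .
qed

lemma three_jumps_perturb_to_zero:
  fixes da qa db qb dc qc :: real and rest :: "(real \<times> real) list"
  defines "js \<equiv> (da, qa) # (db, qb) # (dc, qc) # rest"
  assumes valid: "valid_jumps xl xu js" and pos: "0 < da" "0 < db" "0 < dc" and "qa \<noteq> qb"
  shows "\<exists>js'. length js' = length js \<and> valid_jumps xl xu js' \<and> jump_total js' = jump_total js \<and>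
    jump_mass xl js' = jump_mass xl js \<and> (\<exists>j\<in>set js'. fst j = 0) \<and>
    objective7 xl xu g (step_fun y0 js) \<le> objective7 xl xu g (step_fun y0 js')"
proof -
  define ea eb ec where "ea = qb - qc" and "eb = qc - qa" and "ec = qa - qb"
  define js_at where "js_at t = (da + t * ea, qa) # (db + t * eb, qb) # (dc + t * ec, qc) # rest" for t
  define w where "w x = (if x \<le> qa then ea else 0) + (if x \<le> qb then eb else 0) + (if x \<le> qc then ec else 0)" for x
  have step_at: "step_fun y0 (js_at t) x = step_fun y0 js x + t * w x" for t x
    unfolding js_at_def js_def w_def by (simp add: algebra_simps)
  have "ec \<noteq> 0" "ea + eb + ec = 0" using \<open>qa \<noteq> qb\<close> by (auto simp: ea_def eb_def ec_def)
  then have neg: "ea < 0 \<or> eb < 0 \<or> ec < 0" "- ea < 0 \<or> - eb < 0 \<or> - ec < 0" by linarith+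
  have good: "length (js_at t) = length js \<and> valid_jumps xl xu (js_at t) \<and>
      jump_total (js_at t) = jump_total js \<and> jump_mass xl (js_at t) = jump_mass xl js \<and>
      (\<exists>j\<in>set (js_at t). fst j = 0)"
    if t: "min (da + t * ea) (min (db + t * eb) (dc + t * ec)) = 0" for t
  proof -
    have "0 \<le> da + t * ea" "0 \<le> db + t * eb" "0 \<le> dc + t * ec"
      using t by (simp_all add: min_def split: if_splits)
    moreover have "\<exists>j\<in>set (js_at t). fst j = 0"
      using t unfolding js_at_def by (simp add: min_def split: if_splits)
    moreover have "jump_total (js_at t) = jump_total js" "jump_mass xl (js_at t) = jump_mass xl js"
      unfolding js_at_def js_def ea_def eb_def ec_def by (rule three_jumps_shift_moments)+
    ultimately show ?thesis using valid by (simp add: js_at_def js_def)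
  qed
  obtain t2 where t2: "t2 > 0" "min (da + t2 * ea) (min (db + t2 * eb) (dc + t2 * ec)) = 0"
    using min3_affine_hits_zero[OF pos neg(1)] by blast
  obtain t1' where "t1' > 0" "min (da + t1' * - ea) (min (db + t1' * - eb) (dc + t1' * - ec)) = 0"
    using min3_affine_hits_zero[OF pos neg(2)] by blast
  then obtain t1 where t1: "t1 < 0" "min (da + t1 * ea) (min (db + t1 * eb) (dc + t1 * ec)) = 0"
    by (intro that[of "- t1'"]) auto
  define l where "l = t2 / (t2 - t1)"
  have l: "0 \<le> l" "l \<le> 1" "l * t1 + (1 - l) * t2 = 0"
    using t1 t2 by (auto simp: l_def field_simps)
  have "step_fun y0 js x = l * step_fun y0 (js_at t1) x + (1 - l) * step_fun y0 (js_at t2) x" for x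
  proof -
    have "l * (step_fun y0 js x + t1 * w x) + (1 - l) * (step_fun y0 js x + t2 * w x)
        = step_fun y0 js x + (l * t1 + (1 - l) * t2) * w x" by algebra
    then show ?thesis using l(3) by (simp add: step_at)
  qed
  then have "objective7 xl xu g (step_fun y0 js)
      \<le> max (objective7 xl xu g (step_fun y0 (js_at t1))) (objective7 xl xu g (step_fun y0 (js_at t2)))"
    by (intro objective7_convex[OF step_fun_measurable step_fun_measurable l(1,2)]) auto
  then show ?thesis
    using good[OF t1(2)] good[OF t2(2)] unfolding max_def by (cases "objective7 xl xu g (step_fun y0 (js_at t1))
      \<le> objective7 xl xu g (step_fun y0 (js_at t2))") auto
qed

lemma drop_one_jump:
  assumes valid: "valid_jumps xl xu js" and long: "3 \<le> length js"
  shows "\<exists>js'. length js' < length js \<and> valid_jumps xl xu js' \<and> jump_total js' = jump_total js \<and>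
    jump_mass xl js' = jump_mass xl js \<and>
    objective7 xl xu g (step_fun y0 js) \<le> objective7 xl xu g (step_fun y0 js')"
proof -
  let ?nz = "filter (\<lambda>(d, q). d \<noteq> 0)"
  have drop_zero: "length (?nz ys) < length js \<and> valid_jumps xl xu (?nz ys) \<and>
      jump_total (?nz ys) = jump_total ys \<and> jump_mass xl (?nz ys) = jump_mass xl ys \<and>
      step_fun y0 (?nz ys) = step_fun y0 ys"
    if "length ys = length js" "valid_jumps xl xu ys" "\<exists>j\<in>set ys. fst j = 0" for ys
    using that filter_nonzero_jumps[where js = ys] by auto
  show ?thesis
  proof (cases "\<exists>j\<in>set js. fst j = 0")
    case True
    then show ?thesis using drop_zero[OF refl valid True] by (intro exI[of _ "?nz js"]) simp
  next
    case False
    obtain j1 j2 j3 rest where "js = j1 # j2 # j3 # rest"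
      using long by (cases js; cases "tl js"; cases "tl (tl js)") auto
    moreover obtain da qa db qb dc qc where "j1 = (da, qa)" "j2 = (db, qb)" "j3 = (dc, qc)"
      by (cases j1; cases j2; cases j3) simp
    ultimately have js: "js = (da, qa) # (db, qb) # (dc, qc) # rest" by simp
    have pos: "0 < da" "0 < db" "0 < dc" using False valid unfolding js by force+
    show ?thesis
    proof (cases "qa = qb")
      case True
      let ?js' = "(da + db, qb) # (dc, qc) # rest"
      have "step_fun y0 ?js' = step_fun y0 js" unfolding js True by (simp add: fun_eq_iff algebra_simps)
      then show ?thesis using valid pos unfolding js True by (intro exI[of _ ?js']) (auto simp: algebra_simps)
    next
      case False
      from three_jumps_perturb_to_zero[OF valid[unfolded js] pos False]
      obtain ys where "length ys = length js" "valid_jumps xl xu ys" "jump_total ys = jump_total js"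
        "jump_mass xl ys = jump_mass xl js" "\<exists>j\<in>set ys. fst j = 0"
        "objective7 xl xu g (step_fun y0 js) \<le> objective7 xl xu g (step_fun y0 ys)"
        unfolding js by blast
      then show ?thesis using drop_zero[of ys] by (intro exI[of _ "?nz ys"]) auto
    qed
  qed
qed

lemma reduce_to_two_jumps:
  "valid_jumps xl xu js \<Longrightarrow> \<exists>js'. length js' \<le> 2 \<and> valid_jumps xl xu js' \<and>
    jump_total js' = jump_total js \<and> jump_mass xl js' = jump_mass xl js \<and>
    objective7 xl xu g (step_fun y0 js) \<le> objective7 xl xu g (step_fun y0 js')"
proof (induction js rule: length_induct)
  case (1 js)
  show ?case
  proof (cases "length js \<le> 2")
    case False
    then obtain ys where ys: "length ys < length js" "valid_jumps xl xu ys" "jump_total ys = jump_total js"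
      "jump_mass xl ys = jump_mass xl js"
      "objective7 xl xu g (step_fun y0 js) \<le> objective7 xl xu g (step_fun y0 ys)"
      using drop_one_jump[OF "1.prems"] by fastforce
    then obtain js' where "length js' \<le> 2" "valid_jumps xl xu js'" "jump_total js' = jump_total ys"
      "jump_mass xl js' = jump_mass xl ys"
      "objective7 xl xu g (step_fun y0 ys) \<le> objective7 xl xu g (step_fun y0 js')"
      using "1.IH" by blast
    with ys show ?thesis by (intro exI[of _ js']) auto
  qed (use "1.prems" in blast)
qed

lemma two_step_objective_lipschitz:
  assumes xl: "xl < xu" and p: "p \<in> two_step_params xl xu bl bu C" and p': "p' \<in> two_step_params xl xu bl bu C"
  shows "objective7 xl xu g (two_step p)
    \<le> objective7 xl xu g (two_step p') + ennreal ((3 * (xu - xl) + 2 * (bu - bl)) * dist p p')"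
proof -
  obtain e bound where e: "e \<in> borel_measurable borel" "\<forall>x\<in>{xl<..xu}. 0 \<le> e x"
    "(e has_integral bound) {xl<..xu}" "bound \<le> (3 * (xu - xl) + 2 * (bu - bl)) * dist p p'"
    "\<forall>x. two_step p x \<le> two_step p' x + e x"
    using two_step_le_two_step_add[OF assms] by blast
  obtain y0' d1' d2' q1' q2' where "p' = (y0', d1', d2', q1', q2')" by (cases p') auto
  then have "two_step p' \<in> borel_measurable borel" by (simp add: step_fun_measurable)
  then have "objective7 xl xu g (two_step p) \<le> objective7 xl xu g (two_step p') + ennreal bound"
    using e by (intro objective7_le_add) auto
  with e(4) show ?thesis by (meson add_left_mono ennreal_leI order_trans)
qed

lemma two_step_objective_attains_max:
  assumes "xl < xu" "bl \<le> bu" "bl * (xu - xl) \<le> C" "C \<le> bu * (xu - xl)"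
  shows "\<exists>p\<in>two_step_params xl xu bl bu C. \<forall>p'\<in>two_step_params xl xu bl bu C.
    objective7 xl xu g (two_step p') \<le> objective7 xl xu g (two_step p)"
proof (rule ennreal_lipschitz_attains_sup[OF compact_two_step_params])
  show "two_step_params xl xu bl bu C \<noteq> {}" using two_step_params_nonempty[OF assms(1,3,4)] by blast
  show "0 \<le> 3 * (xu - xl) + 2 * (bu - bl)" using assms(1,2) by simp
qed (rule two_step_objective_lipschitz[OF assms(1)])

lemma objective7_le_two_step:
  assumes xl: "xl < xu" and h: "feasible7 xl xu bl bu C h" and \<epsilon>: "0 < \<epsilon>"
  shows "\<exists>p\<in>two_step_params xl xu bl bu C. objective7 xl xu g h \<le> objective7 xl xu g (two_step p) + ennreal \<epsilon>"
proof -
  obtain n :: nat where n: "(bu - bl) * (xu - xl) / \<epsilon> < real n" using reals_Archimedean2 by blast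
  have "bl \<le> bu" using h xl by (force simp: feasible7_def)
  then have "0 \<le> (bu - bl) * (xu - xl) / \<epsilon>" using xl \<epsilon> by simp
  then have "0 < n" using n by linarith
  define D where "D = (bu - bl) / real n"
  have D: "0 \<le> D" "D * (xu - xl) \<le> \<epsilon>"
    using n \<open>0 < n\<close> \<open>bl \<le> bu\<close> \<epsilon> by (auto simp: D_def field_simps)
  obtain y0 js where js: "valid_jumps xl xu js" "bl \<le> y0" "y0 + jump_total js = bu"
    "(step_fun y0 js has_integral C) {xl<..xu}" "\<forall>x\<in>{xl<..xu}. h x \<le> step_fun y0 js x + D"
    using feasible_dominated_by_step[OF xl h \<open>0 < n\<close>] unfolding D_def by blast
  obtain js' where js': "length js' \<le> 2" "valid_jumps xl xu js'" "jump_total js' = jump_total js"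
    "jump_mass xl js' = jump_mass xl js"
    "objective7 xl xu g (step_fun y0 js) \<le> objective7 xl xu g (step_fun y0 js')"
    using reduce_to_two_jumps[OF js(1)] by blast
  have "(step_fun y0 js' has_integral C) {xl<..xu}"
    using step_fun_has_integral[OF _ js'(2), of y0] step_fun_has_integral[OF _ js(1), of y0]
      has_integral_unique[OF _ js(4)] js'(4) xl by fastforce
  moreover have "y0 + jump_total js' \<le> bu" using js(3) js'(3) by simp
  ultimately obtain p where p: "p \<in> two_step_params xl xu bl bu C" "two_step p = step_fun y0 js'"
    using step_fun_in_two_step_params[OF xl js'(2,1) js(2)] by blast
  have "objective7 xl xu g h \<le> objective7 xl xu g (step_fun y0 js) + ennreal (D * (xu - xl))"
    using js(5) D xl step_fun_measurable
    by (intro objective7_le_add[OF _ _ has_integral_const_Ioc]) auto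
  also have "\<dots> \<le> objective7 xl xu g (two_step p) + ennreal \<epsilon>"
    using js'(5) D(2) p(2) by (intro add_mono ennreal_leI) auto
  finally show ?thesis using p(1) by blast
qed

end

theorem mainTheorem7:
  fixes xl xu bl bu C :: real and g :: "real \<Rightarrow> ereal"
  assumes "xl < xu" and "bl \<le> bu"
    and "bl * (xu - xl) \<le> C" and "C \<le> bu * (xu - xl)"
    and "\<forall>x\<in>{xl<..xu}. g x \<noteq> -\<infinity>"
    and "g \<in> borel_measurable (restrict_space lebesgue {xl<..xu})"
  shows "\<exists>hs. feasible7 xl xu bl bu C hs \<and>
           (\<forall>h. feasible7 xl xu bl bu C h \<longrightarrow> objective7 xl xu g h \<le> objective7 xl xu g hs) \<and>
           (\<exists>y1 y2 y3 x1 x2. bl \<le> y3 \<and> y3 \<le> y2 \<and> y2 \<le> y1 \<and> y1 \<le> bu \<and>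
              xl \<le> x1 \<and> x1 \<le> x2 \<and> x2 \<le> xu \<and>
              (\<forall>x\<in>{xl<..xu}. hs x = (if x \<le> x1 then y1 else if x \<le> x2 then y2 else y3)))"
proof -
  obtain p where p: "p \<in> two_step_params xl xu bl bu C"
    and p_max: "\<forall>p'\<in>two_step_params xl xu bl bu C. objective7 xl xu g (two_step p') \<le> objective7 xl xu g (two_step p)"
    using two_step_objective_attains_max[OF assms(5,6,1-4)] by blast
  have "objective7 xl xu g h \<le> objective7 xl xu g (two_step p)" if h: "feasible7 xl xu bl bu C h" for h
  proof (rule ennreal_le_epsilon)
    fix \<epsilon> :: real assume "0 < \<epsilon>"
    then obtain p' where "p' \<in> two_step_params xl xu bl bu C"
      "objective7 xl xu g h \<le> objective7 xl xu g (two_step p') + ennreal \<epsilon>"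
      using objective7_le_two_step[OF assms(5,6,1) h] by blast
    with p_max show "objective7 xl xu g h \<le> objective7 xl xu g (two_step p) + ennreal \<epsilon>"
      by (meson add_right_mono order_trans)
  qed
  then show ?thesis
    using two_step_feasible[OF assms(1) p] two_step_three_levels[OF p] by blast
qed

end
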